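(* Fix constants $\alpha,\beta$. For parameters $r,s$, let $a^{(r,s)}_n$ be the sequence with generating function $$G_{r,s}(x)=\cfrac{1}{1-(\alpha+s)x-\cfrac{\beta x^2}{1-(\alpha+r)x-\cfrac{\beta x^2}{1-(\alpha+r)x}}},$$ and let $b^{(r,s)}_n$ be its revert transform. Then the Hankel transform $\left(\det(b^{(r,s)}_{i+j})_{0\le i,j\le n}\right)_{n\ge0}$ is the same sequence for all values of $r$ and $s$.
   Context: For a power series $g(x)$ with $g(0)\ne0$, its revert transform is the sequence whose generating function is $\frac1x\,\mathrm{Rev}(xg(x))$, where $\mathrm{Rev}(f)$ denotes the compositional inverse of $f$ (the series $u$ with $f(u(x))=x$, $u(0)=0$). The Hankel transform of a sequence $(b_n)$ is the sequence $h_n=\det(b_{i+j})_{0\le i,j\le n}$, $n\ge0$. *)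

theory Defs
  imports "HOL-Computational_Algebra.Formal_Power_Series" "Jordan_Normal_Form.Determinant"
begin

text \<open>The generating function G_{r,s}(x) as a formal power series (continued fraction,
  every denominator has constant term 1, so the fps inverses are genuine inverses).\<close>
definition G_rs :: "complex \<Rightarrow> complex \<Rightarrow> complex \<Rightarrow> complex \<Rightarrow> complex fps" where
  "G_rs \<alpha> \<beta> r s =
     (let inner = 1 - fps_const (\<alpha> + r) * fps_X;
          mid = 1 - fps_const (\<alpha> + r) * fps_X - fps_const \<beta> * fps_X ^ 2 * inverse inner
      in inverse (1 - fps_const (\<alpha> + s) * fps_X - fps_const \<beta> * fps_X ^ 2 * inverse mid))"

text \<open>Revert transform of g (with g(0) nonzero): coefficients of (1/x) Rev(x g(x)),
  where Rev is the compositional inverse (library fps_inv).\<close>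
definition revert_transform :: "complex fps \<Rightarrow> nat \<Rightarrow> complex" where
  "revert_transform g n = fps_nth (fps_inv (fps_X * g)) (n + 1)"

definition hankel_transform :: "(nat \<Rightarrow> complex) \<Rightarrow> nat \<Rightarrow> complex" where
  "hankel_transform b n = det (mat (n + 1) (n + 1) (\<lambda>(i, j). b (i + j)))"

end

theory Submission
  imports Defs
begin

(* Write N_t = x/(1 - t x); these substitutions compose as N_t o N_u = N_(t+u).
   Substituting N_(-r) into the J-fraction G_(r,s) multiplies each of its levels by 1 + r x and
   lowers the linear coefficient of each level by r, so that x G_(r,s) o N_(-r) = N_(s-r) o x G_(0,0)
   and hence Rev(x G_(r,s)) = N_(-r) o Rev(x G_(0,0)) o N_(r-s).  Writing Rev(x G) = x / c_G, this
   reads c_(G_(r,s)) = (1 - (r-s) x) c_(G_(0,0))(N_(r-s)) + r x, so the coefficients of c_(G_(r,s))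
   from degree 2 on are the binomial transform, with parameter r - s, of those of c_(G_(0,0)).
   Finally the Hankel determinant of order n+1 of 1/c is (-1)^n times the Hankel determinant of
   order n of the shifted sequence c_(k+2), and Hankel determinants are invariant under binomial
   transforms (congruence by a unipotent Pascal matrix). *)

definition lower_tri_mat :: "nat \<Rightarrow> (nat \<Rightarrow> nat \<Rightarrow> 'a::zero) \<Rightarrow> 'a mat" where
  "lower_tri_mat n f = mat n n (\<lambda>(i, j). if j \<le> i then f i j else 0)"

definition upper_tri_mat :: "nat \<Rightarrow> (nat \<Rightarrow> nat \<Rightarrow> 'a::zero) \<Rightarrow> 'a mat" where
  "upper_tri_mat n f = mat n n (\<lambda>(i, j). if i \<le> j then f i j else 0)"

lemma lower_tri_mat_carrier [simp]: "lower_tri_mat n f \<in> carrier_mat n n"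
  by (simp add: lower_tri_mat_def)

lemma upper_tri_mat_carrier [simp]: "upper_tri_mat n f \<in> carrier_mat n n"
  by (simp add: upper_tri_mat_def)

lemma det_lower_tri_mat: "det (lower_tri_mat n f) = (\<Prod>i<n. f i i)"
  by (subst det_lower_triangular[of n])
     (auto simp: lower_tri_mat_def prod_list_diag_prod atLeast0LessThan)

lemma det_upper_tri_mat: "det (upper_tri_mat n f) = (\<Prod>i<n. f i i)"
  by (subst det_upper_triangular[of _ n])
     (auto simp: upper_tri_mat_def upper_triangular_def prod_list_diag_prod atLeast0LessThan)

lemma sum_lessThan_if_le:
  fixes F :: "nat \<Rightarrow> 'a::comm_monoid_add"
  assumes "i < n"
  shows "(\<Sum>k<n. if k \<le> i then F k else 0) = (\<Sum>k\<le>i. F k)"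
proof -
  have "(\<Sum>k<n. if k \<le> i then F k else 0) = sum F ({..<n} \<inter> {k. k \<le> i})"
    by (simp add: sum.inter_restrict)
  also have "{..<n} \<inter> {k. k \<le> i} = {..i}" using assms by auto
  finally show ?thesis .
qed

lemma index_mult_mat_sum:
  assumes "A \<in> carrier_mat n m" "B \<in> carrier_mat m p" "i < n" "j < p"
  shows "(A * B) $$ (i, j) = (\<Sum>k<m. A $$ (i, k) * B $$ (k, j))"
  using assms by (simp add: scalar_prod_def atLeast0LessThan)

lemma index_lower_tri_mat_mult:
  assumes "A \<in> carrier_mat n m" "i < n" "j < m"
  shows "(lower_tri_mat n f * A) $$ (i, j) = (\<Sum>k\<le>i. f i k * A $$ (k, j))"
proof -
  have "(lower_tri_mat n f * A) $$ (i, j) = (\<Sum>k<n. lower_tri_mat n f $$ (i, k) * A $$ (k, j))"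
    using assms by (intro index_mult_mat_sum) auto
  also have "\<dots> = (\<Sum>k<n. if k \<le> i then f i k * A $$ (k, j) else 0)"
    using assms by (intro sum.cong) (auto simp: lower_tri_mat_def)
  finally show ?thesis using assms(2) by (simp add: sum_lessThan_if_le)
qed

lemma index_mult_upper_tri_mat:
  assumes "A \<in> carrier_mat m n" "i < m" "j < n"
  shows "(A * upper_tri_mat n f) $$ (i, j) = (\<Sum>k\<le>j. A $$ (i, k) * f k j)"
proof -
  have "(A * upper_tri_mat n f) $$ (i, j) = (\<Sum>k<n. A $$ (i, k) * upper_tri_mat n f $$ (k, j))"
    using assms by (intro index_mult_mat_sum) auto
  also have "\<dots> = (\<Sum>k<n. if k \<le> j then A $$ (i, k) * f k j else 0)"
    using assms by (intro sum.cong) (auto simp: upper_tri_mat_def)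
  finally show ?thesis using assms(3) by (simp add: sum_lessThan_if_le)
qed

definition hankel_det :: "(nat \<Rightarrow> 'a::comm_ring_1) \<Rightarrow> nat \<Rightarrow> 'a" where
  "hankel_det a n = det (mat n n (\<lambda>(i, j). a (i + j)))"

definition binomial_transform :: "'a::comm_ring_1 \<Rightarrow> (nat \<Rightarrow> 'a) \<Rightarrow> nat \<Rightarrow> 'a" where
  "binomial_transform t a n = (\<Sum>k\<le>n. of_nat (n choose k) * t ^ (n - k) * a k)"

lemma binomial_transform_0 [simp]: "binomial_transform t a 0 = a 0"
  by (simp add: binomial_transform_def)

lemma binomial_transform_Suc:
  "binomial_transform t a (Suc n) = t * binomial_transform t a n + binomial_transform t (\<lambda>k. a (Suc k)) n"
proof -
  have "binomial_transform t a (Suc n) = t ^ Suc n * a 0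
      + (\<Sum>k\<le>n. of_nat (n choose Suc k) * t ^ (n - k) * a (Suc k))
      + (\<Sum>k\<le>n. of_nat (n choose k) * t ^ (n - k) * a (Suc k))"
    unfolding binomial_transform_def sum.atMost_Suc_shift
    by (simp add: sum.distrib[symmetric] algebra_simps)
  moreover have "t * binomial_transform t a n
      = t ^ Suc n * a 0 + (\<Sum>k\<le>n. of_nat (n choose Suc k) * t ^ (n - k) * a (Suc k))"
  proof -
    have "t * binomial_transform t a n = (\<Sum>k\<le>n. of_nat (n choose k) * t ^ (Suc n - k) * a k)"
      unfolding binomial_transform_def sum_distrib_left
      by (intro sum.cong) (simp_all add: Suc_diff_le algebra_simps)
    also have "\<dots> = (\<Sum>k\<le>Suc n. of_nat (n choose k) * t ^ (Suc n - k) * a k)"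
      by (simp add: binomial_eq_0)
    finally show ?thesis unfolding sum.atMost_Suc_shift by simp
  qed
  ultimately show ?thesis by (simp add: binomial_transform_def)
qed

lemma binomial_transform_add:
  "binomial_transform t a (i + j)
     = binomial_transform t (\<lambda>k. binomial_transform t (\<lambda>m. a (k + m)) j) i"
proof (induction i arbitrary: a)
  case 0
  then show ?case by simp
next
  case (Suc i)
  have "binomial_transform t a (Suc i + j)
      = t * binomial_transform t a (i + j) + binomial_transform t (\<lambda>m. a (Suc m)) (i + j)"
    by (simp add: binomial_transform_Suc)
  also have "\<dots> = binomial_transform t (\<lambda>k. binomial_transform t (\<lambda>m. a (k + m)) j) (Suc i)"
    by (simp add: Suc.IH binomial_transform_Suc)
  finally show ?case .
qed

lemma hankel_det_binomial_transform:
  "hankel_det (binomial_transform t a) n = hankel_det a n"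
proof -
  define P where "P = lower_tri_mat n (\<lambda>i k. of_nat (i choose k) * t ^ (i - k))"
  define Q where "Q = upper_tri_mat n (\<lambda>l j. of_nat (j choose l) * t ^ (j - l))"
  define H where "H = mat n n (\<lambda>(i, j). a (i + j))"
  have H: "H \<in> carrier_mat n n" by (simp add: H_def)
  have PH: "P * H \<in> carrier_mat n n" unfolding P_def by (rule mult_carrier_mat[OF _ H]) simp
  have "mat n n (\<lambda>(i, j). binomial_transform t a (i + j)) = P * H * Q"
  proof (rule eq_matI)
    fix i j assume "i < dim_row (P * H * Q)" "j < dim_col (P * H * Q)"
    then have i: "i < n" and j: "j < n" by (simp_all add: P_def Q_def lower_tri_mat_def upper_tri_mat_def)
    have "(P * H * Q) $$ (i, j) = (\<Sum>l\<le>j. (P * H) $$ (i, l) * (of_nat (j choose l) * t ^ (j - l)))"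
      unfolding Q_def using i j PH by (simp add: index_mult_upper_tri_mat)
    also have "\<dots> = (\<Sum>l\<le>j. (\<Sum>k\<le>i. of_nat (i choose k) * t ^ (i - k) * a (k + l))
                                * (of_nat (j choose l) * t ^ (j - l)))"
    proof (intro sum.cong refl arg_cong2[where f = "(*)"])
      fix l assume "l \<in> {..j}"
      then have "(P * H) $$ (i, l) = (\<Sum>k\<le>i. of_nat (i choose k) * t ^ (i - k) * H $$ (k, l))"
        using i j unfolding P_def by (intro index_lower_tri_mat_mult[OF H]) auto
      also have "\<dots> = (\<Sum>k\<le>i. of_nat (i choose k) * t ^ (i - k) * a (k + l))"
        using i j \<open>l \<in> {..j}\<close> by (intro sum.cong) (auto simp: H_def)
      finally show "(P * H) $$ (i, l) = \<dots>" .
    qed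
    also have "\<dots> = (\<Sum>k\<le>i. of_nat (i choose k) * t ^ (i - k) * binomial_transform t (\<lambda>m. a (k + m)) j)"
      unfolding binomial_transform_def sum_distrib_left sum_distrib_right
      by (subst sum.swap) (simp add: algebra_simps)
    finally show "mat n n (\<lambda>(i, j). binomial_transform t a (i + j)) $$ (i, j) = (P * H * Q) $$ (i, j)"
      using i j by (simp add: binomial_transform_add binomial_transform_def[of t _ i])
  qed (simp_all add: P_def Q_def lower_tri_mat_def upper_tri_mat_def)
  then have "hankel_det (binomial_transform t a) n = det P * det H * det Q"
    using det_mult[OF PH, of Q] det_mult[of P n H] H by (simp add: hankel_det_def P_def Q_def)
  then show ?thesis by (simp add: P_def Q_def det_lower_tri_mat det_upper_tri_mat hankel_det_def H_def)
qed

lemma fps_mult_eq_1_nth_split: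
  fixes B C :: "'a::comm_ring_1 fps"
  assumes "B * C = 1" and "0 < i"
  shows "(\<Sum>k\<le>i. fps_nth C (i - k) * fps_nth B (k + j)) + (\<Sum>k<j. fps_nth C (i + Suc k) * fps_nth B (j - Suc k)) = 0"
proof -
  define F where "F q = fps_nth B q * fps_nth C (i + j - q)" for q
  have "{0..i + j} = {j..i + j} \<union> {..<j}" by auto
  then have "fps_nth (B * C) (i + j) = sum F ({j..i + j} \<union> {..<j})"
    by (simp add: fps_mult_nth F_def)
  also have "\<dots> = sum F {j..i + j} + sum F {..<j}"
    by (rule sum.union_disjoint) auto
  finally have "fps_nth (B * C) (i + j) = sum F {j..i + j} + sum F {..<j}" .
  moreover have "sum F {j..i + j} = (\<Sum>k\<le>i. fps_nth C (i - k) * fps_nth B (k + j))"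
    using sum.shift_bounds_cl_nat_ivl[of F 0 j i]
    by (simp add: F_def atLeast0AtMost mult.commute)
  moreover have "sum F {..<j} = (\<Sum>k<j. F (j - Suc k))"
    by (rule sum.nat_diff_reindex[symmetric])
  moreover have "\<dots> = (\<Sum>k<j. fps_nth C (i + Suc k) * fps_nth B (j - Suc k))"
    by (intro sum.cong) (auto simp: F_def mult.commute)
  ultimately show ?thesis using assms by simp
qed

lemma toeplitz_mult_hankel_fps_inverse:
  fixes B C :: "'a::comm_ring_1 fps" and n :: nat
  assumes BC: "B * C = 1" and C0: "fps_nth C 0 = 1"
  defines "K \<equiv> mat n n (\<lambda>(i, j). fps_nth C (i + j + 2))"
  shows "lower_tri_mat (Suc n) (\<lambda>i k. fps_nth C (i - k)) * mat (Suc n) (Suc n) (\<lambda>(i, j). fps_nth B (i + j))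
       = four_block_mat (1\<^sub>m 1) (0\<^sub>m 1 n) (0\<^sub>m n 1) ((-1) \<cdot>\<^sub>m K) * upper_tri_mat (Suc n) (\<lambda>k j. fps_nth B (j - k))"
    (is "?T * ?H = _ * ?U")
proof -
  define N where "N = four_block_mat (1\<^sub>m 1) (0\<^sub>m 1 n) (0\<^sub>m n 1) ((-1) \<cdot>\<^sub>m K)"
  have H: "?H \<in> carrier_mat (Suc n) (Suc n)" by simp
  have N: "N \<in> carrier_mat (Suc n) (Suc n)"
    using four_block_carrier_mat[of "1\<^sub>m 1" 1 1 "(-1) \<cdot>\<^sub>m K" n n] by (simp add: N_def K_def)
  have N_entry: "N $$ (i, k) = (if i = 0 then (if k = 0 then 1 else 0)
                                else if k = 0 then 0 else - fps_nth C (i + k))"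
    if "i < Suc n" "k < Suc n" for i k
    using that by (auto simp: N_def K_def)
  have "?T * ?H = N * ?U"
  proof (rule eq_matI)
    fix i j assume "i < dim_row (N * ?U)" "j < dim_col (N * ?U)"
    then have i: "i < Suc n" and j: "j < Suc n" using N by (simp_all add: upper_tri_mat_def)
    have "(?T * ?H) $$ (i, j) = (\<Sum>k\<le>i. fps_nth C (i - k) * ?H $$ (k, j))"
      using i j by (intro index_lower_tri_mat_mult[OF H])
    also have "\<dots> = (\<Sum>k\<le>i. fps_nth C (i - k) * fps_nth B (k + j))"
      using i j by (intro sum.cong) auto
    finally have TH: "(?T * ?H) $$ (i, j) = \<dots>" .
    have "(N * ?U) $$ (i, j) = (\<Sum>k\<le>j. N $$ (i, k) * fps_nth B (j - k))"
      using i j by (intro index_mult_upper_tri_mat[OF N])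
    also have "\<dots> = N $$ (i, 0) * fps_nth B j + (\<Sum>k<j. N $$ (i, Suc k) * fps_nth B (j - Suc k))"
      by (simp add: sum.atMost_shift)
    also have "\<dots> = N $$ (i, 0) * fps_nth B j
        + (\<Sum>k<j. if i = 0 then 0 else - (fps_nth C (i + Suc k) * fps_nth B (j - Suc k)))"
      using i j by (intro arg_cong2[where f = "(+)"] sum.cong) (simp_all add: N_entry)
    finally have NU: "(N * ?U) $$ (i, j) = \<dots>" .
    show "(?T * ?H) $$ (i, j) = (N * ?U) $$ (i, j)"
    proof (cases "i = 0")
      case True
      then show ?thesis unfolding TH NU by (simp add: N_entry C0)
    next
      case False
      have "(?T * ?H) $$ (i, j) + (\<Sum>k<j. fps_nth C (i + Suc k) * fps_nth B (j - Suc k)) = 0"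
        using fps_mult_eq_1_nth_split[OF BC, of i j] False by (simp add: TH)
      then show ?thesis using i False by (simp add: NU N_entry sum_negf eq_neg_iff_add_eq_0)
    qed
  qed (use N in \<open>simp_all add: lower_tri_mat_def upper_tri_mat_def\<close>)
  then show ?thesis by (simp add: N_def)
qed

lemma hankel_det_fps_inverse:
  fixes B C :: "'a::comm_ring_1 fps"
  assumes BC: "B * C = 1" and C0: "fps_nth C 0 = 1"
  shows "hankel_det (fps_nth B) (Suc n) = (-1) ^ n * hankel_det (\<lambda>k. fps_nth C (k + 2)) n"
proof -
  have B0: "fps_nth B 0 = 1" using arg_cong[OF BC, of "\<lambda>f. fps_nth f 0"] C0 by simp
  define T where "T = lower_tri_mat (Suc n) (\<lambda>i k. fps_nth C (i - k))"
  define U where "U = upper_tri_mat (Suc n) (\<lambda>k j. fps_nth B (j - k))"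
  define H where "H = mat (Suc n) (Suc n) (\<lambda>(i, j). fps_nth B (i + j))"
  define K where "K = mat n n (\<lambda>(i, j). fps_nth C (i + j + 2))"
  define N where "N = four_block_mat (1\<^sub>m 1) (0\<^sub>m 1 n) (0\<^sub>m n 1) ((-1) \<cdot>\<^sub>m K)"
  have K: "K \<in> carrier_mat n n" by (simp add: K_def)
  have N: "N \<in> carrier_mat (Suc n) (Suc n)"
    using four_block_carrier_mat[of "1\<^sub>m 1" 1 1 "(-1) \<cdot>\<^sub>m K" n n] K by (simp add: N_def)
  have "det T * det H = det N * det U"
    using toeplitz_mult_hankel_fps_inverse[OF BC C0, of n] det_mult[of T "Suc n" H] det_mult[OF N, of U]
    by (simp add: T_def U_def H_def N_def K_def)
  moreover have "det T = 1" and "det U = 1"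
    by (simp_all add: T_def U_def det_lower_tri_mat det_upper_tri_mat C0 B0)
  moreover have "det N = (-1) ^ n * det K"
    unfolding N_def
    by (subst det_four_block_mat_lower_left_zero_col[OF _ _ refl smult_carrier_mat[OF K]])
      (simp_all add: carrier_matD[OF K])
  ultimately show ?thesis by (simp add: hankel_det_def H_def K_def)
qed

definition fps_moebius :: "'a::field \<Rightarrow> 'a fps" where
  "fps_moebius t = fps_X * inverse (1 - fps_const t * fps_X)"

lemma fps_moebius_nth_0 [simp]: "fps_nth (fps_moebius t) 0 = 0"
  by (simp add: fps_moebius_def)

lemma fps_moebius_0 [simp]: "fps_moebius 0 = fps_X"
  by (simp add: fps_moebius_def)

lemma fps_moebius_times: "(1 - fps_const t * fps_X) * fps_moebius t = fps_X"
  unfolding fps_moebius_def by (simp add: mult.left_commute inverse_mult_eq_1')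

lemma fps_X_div_compose:
  fixes c g :: "'a::field fps"
  assumes "fps_nth c 0 \<noteq> 0" and "fps_nth g 0 = 0"
  shows "(fps_X * inverse c) oo g = g * inverse (c oo g)"
  using assms by (simp add: fps_compose_mult_distrib fps_inverse_compose)

lemma fps_moebius_compose:
  fixes g :: "'a::field fps"
  assumes "fps_nth g 0 = 0"
  shows "fps_moebius t oo g = g * inverse (1 - fps_const t * g)"
proof -
  have "fps_moebius t oo g = g * inverse ((1 - fps_const t * fps_X) oo g)"
    unfolding fps_moebius_def by (rule fps_X_div_compose) (simp_all add: assms)
  then show ?thesis
    using assms by (simp add: fps_compose_sub_distrib fps_const_mult_apply_left[symmetric])
qed

lemma fps_moebius_compose_X_div:
  fixes c :: "'a::field fps"
  assumes c0: "fps_nth c 0 \<noteq> 0"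
  shows "fps_moebius t oo (fps_X * inverse c) = fps_X * inverse (c - fps_const t * fps_X)"
proof -
  have "fps_moebius t oo (fps_X * inverse c) = fps_X * inverse (c * (1 - fps_const t * (fps_X * inverse c)))"
    by (simp add: fps_moebius_compose fps_inverse_mult mult.assoc)
  also have "c * (1 - fps_const t * (fps_X * inverse c)) = c - fps_const t * fps_X"
    using c0 by (simp add: algebra_simps inverse_mult_eq_1')
  finally show ?thesis .
qed

lemma fps_X_div_compose_moebius:
  fixes c :: "'a::field fps"
  assumes "fps_nth c 0 \<noteq> 0"
  shows "(fps_X * inverse c) oo fps_moebius t
           = fps_X * inverse ((1 - fps_const t * fps_X) * (c oo fps_moebius t))"
  using assms by (simp add: fps_X_div_compose fps_moebius_def fps_inverse_mult mult.assoc)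

lemma fps_moebius_compose_moebius: "fps_moebius t oo fps_moebius u = fps_moebius (t + u)"
  unfolding fps_moebius_def[of u]
  by (simp add: fps_moebius_compose_X_div)
    (simp add: fps_moebius_def algebra_simps flip: fps_const_add)

lemma fps_compose_moebius_expand:
  "g oo fps_moebius t = fps_const (fps_nth g 0) + fps_moebius t * (fps_shift 1 g oo fps_moebius t)"
proof -
  have "g = fps_const (fps_nth g 0) + fps_X * fps_shift 1 g"
    by (rule fps_ext) simp
  then have "g oo fps_moebius t = (fps_const (fps_nth g 0) + fps_X * fps_shift 1 g) oo fps_moebius t"
    by simp
  then show ?thesis by (simp add: fps_compose_add_distrib fps_compose_mult_distrib)
qed

lemma fps_nth_binomial_transform:
  fixes h :: "'a::field fps"
  shows "fps_nth (inverse (1 - fps_const t * fps_X) * (h oo fps_moebius t)) n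
           = binomial_transform t (fps_nth h) n"
proof (induction n arbitrary: h)
  case 0
  then show ?case by simp
next
  case (Suc n)
  define E where "E h = inverse (1 - fps_const t * fps_X) * (h oo fps_moebius t)" for h :: "'a fps"
  have "(1 - fps_const t * fps_X) * E h = h oo fps_moebius t"
    by (simp add: E_def mult.assoc[symmetric] inverse_mult_eq_1')
  also have "\<dots> = fps_const (fps_nth h 0) + fps_moebius t * (fps_shift 1 h oo fps_moebius t)"
    by (rule fps_compose_moebius_expand)
  also have "fps_moebius t * (fps_shift 1 h oo fps_moebius t) = fps_X * E (fps_shift 1 h)"
    by (simp add: E_def fps_moebius_def mult.assoc)
  finally have "(1 - fps_const t * fps_X) * E h = fps_const (fps_nth h 0) + fps_X * E (fps_shift 1 h)" .
  from arg_cong[OF this, of "\<lambda>f. fps_nth f (Suc n)"]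
  have "fps_nth (E h) (Suc n) = t * fps_nth (E h) n + fps_nth (E (fps_shift 1 h)) n"
    by (simp add: algebra_simps)
  also have "\<dots> = binomial_transform t (fps_nth h) (Suc n)"
    using Suc.IH by (simp add: E_def binomial_transform_Suc)
  finally show ?case by (simp add: E_def)
qed

lemma fps_nth_moebius_compose_add_2:
  fixes g :: "'a::field fps"
  shows "fps_nth ((1 - fps_const t * fps_X) * (g oo fps_moebius t)) (n + 2)
           = binomial_transform t (\<lambda>k. fps_nth g (k + 2)) n"
proof -
  define L where "L = 1 - fps_const t * fps_X"
  have "L * (g oo fps_moebius t) = L * fps_const (fps_nth g 0) + fps_X * (fps_shift 1 g oo fps_moebius t)"
    by (simp add: fps_compose_moebius_expand[of g] L_def distrib_left fps_moebius_times mult.assoc[symmetric])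
  also have "fps_shift 1 g oo fps_moebius t
      = fps_const (fps_nth (fps_shift 1 g) 0) + fps_moebius t * (fps_shift 1 (fps_shift 1 g) oo fps_moebius t)"
    by (rule fps_compose_moebius_expand)
  also have "fps_moebius t * (fps_shift 1 (fps_shift 1 g) oo fps_moebius t)
      = fps_X * (inverse L * (fps_shift 1 (fps_shift 1 g) oo fps_moebius t))"
    by (simp add: fps_moebius_def L_def mult.assoc)
  finally have "fps_nth (L * (g oo fps_moebius t)) (n + 2)
      = fps_nth (inverse L * (fps_shift 1 (fps_shift 1 g) oo fps_moebius t)) n"
    by (simp add: L_def)
  moreover have "fps_nth (fps_shift 1 (fps_shift 1 g)) = (\<lambda>k. fps_nth g (k + 2))"
    by (simp add: fun_eq_iff)
  ultimately show ?thesis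
    by (simp add: L_def fps_nth_binomial_transform)
qed

definition jfrac_step :: "'a::field \<Rightarrow> 'a \<Rightarrow> 'a fps \<Rightarrow> 'a fps" where
  "jfrac_step c \<beta> T = inverse (1 - fps_const c * fps_X - fps_const \<beta> * fps_X ^ 2 * T)"

lemma G_rs_jfrac_step:
  "G_rs \<alpha> \<beta> r s = jfrac_step (\<alpha> + s) \<beta> (jfrac_step (\<alpha> + r) \<beta> (jfrac_step (\<alpha> + r) \<beta> 0))"
  by (simp add: G_rs_def jfrac_step_def Let_def)

lemma jfrac_step_compose_moebius:
  fixes T T' :: "'a::field fps"
  assumes T: "T oo fps_moebius t = (1 - fps_const t * fps_X) * T'"
  shows "jfrac_step c \<beta> T oo fps_moebius t = (1 - fps_const t * fps_X) * jfrac_step (c + t) \<beta> T'"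
proof -
  define L where "L = 1 - fps_const t * fps_X"
  define a where "a = inverse L"
  have La: "L * a = 1" by (simp add: a_def L_def inverse_mult_eq_1')
  have N: "fps_moebius t = fps_X * a" by (simp add: fps_moebius_def a_def L_def)
  have "jfrac_step c \<beta> T oo fps_moebius t
      = inverse (1 - fps_const c * fps_moebius t - fps_const \<beta> * fps_moebius t ^ 2 * (T oo fps_moebius t))"
    unfolding jfrac_step_def
    by (simp add: fps_inverse_compose fps_compose_sub_distrib fps_compose_mult_distrib
        fps_X_power_compose fps_const_mult_apply_left[symmetric])
  also have "1 - fps_const c * fps_moebius t - fps_const \<beta> * fps_moebius t ^ 2 * (T oo fps_moebius t)
      = a * (1 - fps_const (c + t) * fps_X - fps_const \<beta> * fps_X ^ 2 * T')"
  proof -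
    have "fps_moebius t ^ 2 * (T oo fps_moebius t) = fps_X ^ 2 * a * T' * (L * a)"
      unfolding T unfolding N by (simp add: power2_eq_square L_def algebra_simps)
    then have "1 - fps_const c * fps_moebius t - fps_const \<beta> * fps_moebius t ^ 2 * (T oo fps_moebius t)
        = L * a - fps_const c * (fps_X * a) - fps_const \<beta> * (fps_X ^ 2 * a * T')"
      by (simp add: La N)
    then show ?thesis by (simp add: L_def algebra_simps flip: fps_const_add)
  qed
  also have "inverse (a * (1 - fps_const (c + t) * fps_X - fps_const \<beta> * fps_X ^ 2 * T'))
      = L * jfrac_step (c + t) \<beta> T'"
    by (simp add: fps_inverse_mult jfrac_step_def a_def L_def)
  finally show ?thesis by (simp add: L_def)
qed

lemma fps_X_times_jfrac_step:
  "fps_X * jfrac_step (c + t) \<beta> T = fps_moebius t oo (fps_X * jfrac_step c \<beta> T)"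
  unfolding jfrac_step_def
  by (subst fps_moebius_compose_X_div)
    (simp_all add: algebra_simps flip: fps_const_add)

lemma fps_inv_eqI:
  fixes f w :: "'a::field fps"
  assumes f0: "fps_nth f 0 = 0" and f1: "fps_nth f 1 \<noteq> 0" and w0: "fps_nth w 0 = 0"
    and fw: "f oo w = fps_X"
  shows "fps_inv f = w"
proof -
  have "fps_inv f = fps_inv f oo (f oo w)" by (simp add: fw)
  also have "\<dots> = (fps_inv f oo f) oo w" by (rule fps_compose_assoc[OF w0 f0])
  finally show ?thesis using w0 by (simp add: fps_inv[OF f0 f1])
qed

definition revert_reciprocal :: "'a::field fps \<Rightarrow> 'a fps" where
  "revert_reciprocal g = inverse (fps_shift 1 (fps_inv (fps_X * g)))"

lemma
  fixes g :: "'a::field fps"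
  assumes "fps_nth g 0 \<noteq> 0"
  shows fps_inv_fps_X_times: "fps_inv (fps_X * g) = fps_X * inverse (revert_reciprocal g)"
    and revert_reciprocal_nth_0: "fps_nth (revert_reciprocal g) 0 = fps_nth g 0"
proof -
  define u where "u = fps_inv (fps_X * g)"
  have u0: "fps_nth u 0 = 0" and u1: "fps_nth u 1 = inverse (fps_nth g 0)"
    by (simp_all add: u_def fps_inv_def field_simps)
  have "fps_nth (fps_shift 1 u) 0 \<noteq> 0" using u1 assms by simp
  then have "inverse (revert_reciprocal g) = fps_shift 1 u"
    by (simp add: revert_reciprocal_def u_def)
  moreover have "fps_X * fps_shift 1 u = u" by (rule fps_ext) (simp add: u0)
  ultimately show "fps_inv (fps_X * g) = fps_X * inverse (revert_reciprocal g)"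
    by (simp add: u_def)
  show "fps_nth (revert_reciprocal g) 0 = fps_nth g 0"
    using u1 by (simp add: revert_reciprocal_def u_def[symmetric])
qed

lemma hankel_transform_revert_transform:
  assumes "fps_nth g 0 = 1"
  shows "hankel_transform (revert_transform g) n
           = (-1) ^ n * hankel_det (\<lambda>k. fps_nth (revert_reciprocal g) (k + 2)) n"
proof -
  have "revert_transform g = fps_nth (inverse (revert_reciprocal g))"
    using assms by (simp add: revert_transform_def fps_inv_fps_X_times fun_eq_iff)
  then have "hankel_transform (revert_transform g) n
      = hankel_det (fps_nth (inverse (revert_reciprocal g))) (Suc n)"
    by (simp add: hankel_transform_def hankel_det_def)
  also have "\<dots> = (-1) ^ n * hankel_det (\<lambda>k. fps_nth (revert_reciprocal g) (k + 2)) n"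
    using assms by (intro hankel_det_fps_inverse inverse_mult_eq_1) (simp_all add: revert_reciprocal_nth_0)
  finally show ?thesis .
qed

lemma G_rs_nth_0 [simp]: "fps_nth (G_rs \<alpha> \<beta> r s) 0 = 1"
  by (simp add: G_rs_def Let_def)

lemma fps_X_G_rs_compose_moebius:
  "(fps_X * G_rs \<alpha> \<beta> r s) oo fps_moebius (- r) = fps_moebius (s - r) oo (fps_X * G_rs \<alpha> \<beta> 0 0)"
proof -
  define L where "L = 1 - fps_const (- r) * fps_X"
  define J where "J = jfrac_step \<alpha> \<beta> (jfrac_step \<alpha> \<beta> 0)"
  have "jfrac_step (\<alpha> + r) \<beta> 0 oo fps_moebius (- r) = L * jfrac_step \<alpha> \<beta> 0"
    using jfrac_step_compose_moebius[of 0 "- r" 0 "\<alpha> + r" \<beta>] by (simp add: L_def)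
  then have "jfrac_step (\<alpha> + r) \<beta> (jfrac_step (\<alpha> + r) \<beta> 0) oo fps_moebius (- r) = L * J"
    using jfrac_step_compose_moebius[of _ "- r" _ "\<alpha> + r" \<beta>] by (simp add: L_def J_def)
  then have "G_rs \<alpha> \<beta> r s oo fps_moebius (- r) = L * jfrac_step (\<alpha> + (s - r)) \<beta> J"
    using jfrac_step_compose_moebius[of _ "- r" _ "\<alpha> + s" \<beta>] by (simp add: G_rs_jfrac_step L_def add_diff_eq)
  then have "(fps_X * G_rs \<alpha> \<beta> r s) oo fps_moebius (- r) = fps_X * jfrac_step (\<alpha> + (s - r)) \<beta> J"
    using fps_moebius_times[of "- r"]
    by (simp add: fps_compose_mult_distrib L_def mult.assoc[symmetric] mult.commute[of "fps_moebius (- r)"])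
  also have "\<dots> = fps_moebius (s - r) oo (fps_X * G_rs \<alpha> \<beta> 0 0)"
    by (simp add: fps_X_times_jfrac_step G_rs_jfrac_step J_def)
  finally show ?thesis .
qed

lemma fps_inv_fps_X_G_rs:
  "fps_inv (fps_X * G_rs \<alpha> \<beta> r s)
     = fps_moebius (- r) oo (fps_inv (fps_X * G_rs \<alpha> \<beta> 0 0) oo fps_moebius (r - s))"
proof (rule fps_inv_eqI)
  define f where "f = fps_X * G_rs \<alpha> \<beta> 0 0"
  define u where "u = fps_inv f"
  have f0: "fps_nth f 0 = 0" and f1: "fps_nth f 1 = 1" by (simp_all add: f_def)
  have u0: "fps_nth u 0 = 0" by (simp add: u_def fps_inv_def)
  have "(fps_X * G_rs \<alpha> \<beta> r s) oo (fps_moebius (- r) oo (u oo fps_moebius (r - s)))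
      = ((fps_X * G_rs \<alpha> \<beta> r s) oo fps_moebius (- r)) oo (u oo fps_moebius (r - s))"
    by (rule fps_compose_assoc) (simp_all add: u0)
  also have "\<dots> = (fps_moebius (s - r) oo f) oo (u oo fps_moebius (r - s))"
    by (simp only: fps_X_G_rs_compose_moebius f_def)
  also have "\<dots> = fps_moebius (s - r) oo (f oo (u oo fps_moebius (r - s)))"
    by (rule fps_compose_assoc[symmetric]) (simp_all add: u0 f0)
  also have "f oo (u oo fps_moebius (r - s)) = (f oo u) oo fps_moebius (r - s)"
    by (rule fps_compose_assoc) (simp_all add: u0)
  also have "f oo u = fps_X" unfolding u_def using f0 f1 by (simp add: fps_inv_right)
  finally show "(fps_X * G_rs \<alpha> \<beta> r s) oo (fps_moebius (- r) oo (u oo fps_moebius (r - s))) = fps_X"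
    by (simp add: fps_moebius_compose_moebius)
  show "fps_nth (fps_moebius (- r) oo (u oo fps_moebius (r - s))) 0 = 0" by simp
qed simp_all

lemma revert_reciprocal_G_rs:
  "revert_reciprocal (G_rs \<alpha> \<beta> r s)
     = (1 - fps_const (r - s) * fps_X) * (revert_reciprocal (G_rs \<alpha> \<beta> 0 0) oo fps_moebius (r - s))
       + fps_const r * fps_X"
proof -
  define c where "c = revert_reciprocal (G_rs \<alpha> \<beta> 0 0)"
  define C where "C = (1 - fps_const (r - s) * fps_X) * (c oo fps_moebius (r - s)) + fps_const r * fps_X"
  have c0: "fps_nth c 0 = 1" by (simp add: c_def revert_reciprocal_nth_0)
  have "fps_X * inverse (revert_reciprocal (G_rs \<alpha> \<beta> r s)) = fps_inv (fps_X * G_rs \<alpha> \<beta> r s)"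
    by (simp add: fps_inv_fps_X_times)
  also have "\<dots> = fps_moebius (- r) oo (fps_inv (fps_X * G_rs \<alpha> \<beta> 0 0) oo fps_moebius (r - s))"
    by (rule fps_inv_fps_X_G_rs)
  also have "fps_inv (fps_X * G_rs \<alpha> \<beta> 0 0) = fps_X * inverse c"
    by (simp add: fps_inv_fps_X_times c_def)
  also have "(fps_X * inverse c) oo fps_moebius (r - s)
      = fps_X * inverse ((1 - fps_const (r - s) * fps_X) * (c oo fps_moebius (r - s)))"
    by (rule fps_X_div_compose_moebius) (simp add: c0)
  also have "fps_moebius (- r) oo \<dots> = fps_X * inverse C"
    by (subst fps_moebius_compose_X_div) (simp_all add: c0 C_def flip: fps_const_neg)
  finally have "fps_X * inverse (revert_reciprocal (G_rs \<alpha> \<beta> r s)) = fps_X * inverse C" .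
  then have "inverse (inverse (revert_reciprocal (G_rs \<alpha> \<beta> r s))) = inverse (inverse C)"
    by simp
  then show ?thesis using c0 by (simp add: revert_reciprocal_nth_0 C_def c_def)
qed

theorem mainTheorem4:
  fixes \<alpha> \<beta> r s r' s' :: complex
  shows "hankel_transform (revert_transform (G_rs \<alpha> \<beta> r s)) =
         hankel_transform (revert_transform (G_rs \<alpha> \<beta> r' s'))"
proof
  fix n
  define c where "c = revert_reciprocal (G_rs \<alpha> \<beta> 0 0)"
  have "hankel_transform (revert_transform (G_rs \<alpha> \<beta> r s)) n
      = (-1) ^ n * hankel_det (\<lambda>k. fps_nth c (k + 2)) n" for r s
  proof -
    have "fps_nth (revert_reciprocal (G_rs \<alpha> \<beta> r s)) (k + 2)
        = binomial_transform (r - s) (\<lambda>k. fps_nth c (k + 2)) k" for k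
      using fps_nth_moebius_compose_add_2[of "r - s" c k]
      by (simp add: revert_reciprocal_G_rs[of \<alpha> \<beta> r s, folded c_def])
    then show ?thesis
      by (simp add: hankel_transform_revert_transform hankel_det_binomial_transform flip: fun_eq_iff)
  qed
  then show "hankel_transform (revert_transform (G_rs \<alpha> \<beta> r s)) n
      = hankel_transform (revert_transform (G_rs \<alpha> \<beta> r' s')) n"
    by simp
qed

end
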